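(* Let $\mathbb{K}\in\{\mathbb{R},\mathbb{C}\}$, let $\mathcal{X}$ be a separable topological $\mathbb{K}$-vector space whose topological dual $\mathcal{X}^{\ast}$ separates the points of $\mathcal{X}$, and let $\mathcal{U}$ be a $0$-neighborhood in $\mathcal{X}$ such that there exists an infinite set $\{\sigma_n\}_{n\in\mathbb{N}}$ of linearly independent elements of $\mathcal{X}^{\ast}$ with $\sup_{A\in\mathcal{U}}|\sigma_n(A)|<\infty$ for every $n$. Then $\mathcal{D}_{0,\mathcal{U}}$ (and hence $\mathcal{D}_{\mathcal{U}}\supseteq\mathcal{D}_{0,\mathcal{U}}$) is dense in $\mathbf{CU}_{\mathcal{U}}(\mathcal{X}^{\ast})$ with respect to the weak*-Hausdorff hypertopology.
   Context: Topological vector spaces are Hausdorff. $\mathcal{X}^{\ast}$ carries the weak* topology. $\mathcal{U}^{\circ}=\{\sigma\in\mathcal{X}^{\ast}:|\sigma(A)|\le1\ \forall A\in\mathcal{U}\}$; $\mathbf{CU}_{\mathcal{U}}(\mathcal{X}^{\ast})$ is the set of nonempty convex weak*-closed subsets of $\mathcal{U}^{\circ}$. For a convex set $C\subseteq\mathcal{X}^{\ast}$, $\mathcal{E}(C)$ is its set of extreme points, and a point $\sigma_0\in C$ is exposed if there is $A\in\mathcal{X}$ such that $\sigma\mapsto\mathrm{Re}\,\sigma(A)$ attains its maximum on $C$ uniquely at $\sigma_0$; $\mathcal{E}_0(C)$ is the set of exposed points. $\mathcal{D}_{\mathcal{U}}=\{U\in\mathbf{CU}_{\mathcal{U}}(\mathcal{X}^{\ast}):U=\overline{\mathcal{E}(U)}\}$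 and $\mathcal{D}_{0,\mathcal{U}}=\{U\in\mathbf{CU}_{\mathcal{U}}(\mathcal{X}^{\ast}):U=\overline{\mathcal{E}_0(U)}\}$ (weak*-closures). The weak*-Hausdorff hypertopology is generated by the extended pseudometrics $d_H^{(A)}(F,\tilde F)=\max\{\sup_{\sigma\in F}\inf_{\tilde\sigma\in\tilde F}|(\sigma-\tilde\sigma)(A)|,\ \sup_{\tilde\sigma\in\tilde F}\inf_{\sigma\in F}|(\sigma-\tilde\sigma)(A)|\}$, $A\in\mathcal{X}$. *)

theory Defs
  imports "HOL-Analysis.Analysis"
begin

text \<open>Scalar field 'k (instantiated to real or complex), space X = type 'a with its
  type-class topology (Hausdorff via t2_space), scalar multiplication sm.\<close>

definition tvs :: "('k::real_normed_field \<Rightarrow> 'a::{ab_group_add,t2_space} \<Rightarrow> 'a) \<Rightarrow> bool" where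
  "tvs sm \<longleftrightarrow> Vector_Spaces.vector_space sm \<and>
     continuous_on UNIV (\<lambda>p::'a \<times> 'a. fst p + snd p) \<and>
     continuous_on UNIV (\<lambda>p::'k \<times> 'a. sm (fst p) (snd p))"

definition tdual :: "('k::real_normed_field \<Rightarrow> 'a::{ab_group_add,topological_space} \<Rightarrow> 'a) \<Rightarrow> ('a \<Rightarrow> 'k) set" where
  "tdual sm = {\<sigma>. (\<forall>x y. \<sigma> (x + y) = \<sigma> x + \<sigma> y) \<and> (\<forall>c x. \<sigma> (sm c x) = c * \<sigma> x)
                     \<and> continuous_on UNIV \<sigma>}"

text \<open>Weak* topology = topology of pointwise convergence on the dual, i.e. the subspace
  topology of the product topology on 'a \<Rightarrow> 'k.\<close>
definition weakstar :: "('k::real_normed_field \<Rightarrow> 'a::{ab_group_add,topological_space} \<Rightarrow> 'a) \<Rightarrow> ('a \<Rightarrow> 'k) topology" where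
  "weakstar sm = subtopology euclidean (tdual sm)"

definition polar :: "('k::real_normed_field \<Rightarrow> 'a::{ab_group_add,topological_space} \<Rightarrow> 'a) \<Rightarrow> 'a set \<Rightarrow> ('a \<Rightarrow> 'k) set" where
  "polar sm U = {\<sigma> \<in> tdual sm. \<forall>A\<in>U. norm (\<sigma> A) \<le> 1}"

definition fconvex :: "('a \<Rightarrow> 'k::real_normed_field) set \<Rightarrow> bool" where
  "fconvex C \<longleftrightarrow> (\<forall>x\<in>C. \<forall>y\<in>C. \<forall>t::real. 0 \<le> t \<and> t \<le> 1 \<longrightarrow>
      (\<lambda>A. of_real t * x A + of_real (1 - t) * y A) \<in> C)"

definition CU :: "('k::real_normed_field \<Rightarrow> 'a::{ab_group_add,topological_space} \<Rightarrow> 'a) \<Rightarrow> 'a set \<Rightarrow> ('a \<Rightarrow> 'k) set set" where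
  "CU sm U = {C. C \<noteq> {} \<and> fconvex C \<and> closedin (weakstar sm) C \<and> C \<subseteq> polar sm U}"

definition extreme_pts :: "('a \<Rightarrow> 'k::real_normed_field) set \<Rightarrow> ('a \<Rightarrow> 'k) set" where
  "extreme_pts C = {\<sigma> \<in> C. \<not> (\<exists>x\<in>C. \<exists>y\<in>C. \<exists>t::real. 0 < t \<and> t < 1 \<and> x \<noteq> y \<and>
       \<sigma> = (\<lambda>A. of_real t * x A + of_real (1 - t) * y A))}"

text \<open>Exposed points; re is the real part (identity for real scalars, Re for complex).\<close>
definition exposed_pts :: "('k \<Rightarrow> real) \<Rightarrow> ('a \<Rightarrow> 'k) set \<Rightarrow> ('a \<Rightarrow> 'k) set" where
  "exposed_pts re C = {\<sigma>0 \<in> C. \<exists>A. \<forall>\<sigma>\<in>C. \<sigma> \<noteq> \<sigma>0 \<longrightarrow> re (\<sigma> A) < re (\<sigma>0 A)}"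

definition DU :: "('k::real_normed_field \<Rightarrow> 'a::{ab_group_add,topological_space} \<Rightarrow> 'a) \<Rightarrow> 'a set \<Rightarrow> ('a \<Rightarrow> 'k) set set" where
  "DU sm U = {C \<in> CU sm U. C = weakstar sm closure_of extreme_pts C}"

definition D0U :: "('k::real_normed_field \<Rightarrow> 'a::{ab_group_add,topological_space} \<Rightarrow> 'a) \<Rightarrow> ('k \<Rightarrow> real) \<Rightarrow> 'a set \<Rightarrow> ('a \<Rightarrow> 'k) set set" where
  "D0U sm re U = {C \<in> CU sm U. C = weakstar sm closure_of exposed_pts re C}"

definition hdist :: "'a::ab_group_add \<Rightarrow> ('a \<Rightarrow> 'k::real_normed_field) set \<Rightarrow> ('a \<Rightarrow> 'k) set \<Rightarrow> ereal" where
  "hdist A F G = max (SUP \<sigma>\<in>F. INF \<tau>\<in>G. ereal (norm (\<sigma> A - \<tau> A)))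
                     (SUP \<tau>\<in>G. INF \<sigma>\<in>F. ereal (norm (\<sigma> A - \<tau> A)))"

text \<open>Weak*-Hausdorff hypertopology: the topology generated by the family of extended
  pseudometrics hdist A, A \<in> X (open sets = sets containing a finite-intersection ball
  around each of their points).\<close>
definition hyper_top :: "(('a::ab_group_add \<Rightarrow> 'k::real_normed_field) set) topology" where
  "hyper_top = topology (\<lambda>S. \<forall>F\<in>S. \<exists>As \<epsilon>. finite As \<and> \<epsilon> > 0 \<and>
      {G. \<forall>A\<in>As. hdist A F G < ereal \<epsilon>} \<subseteq> S)"

definition lin_indep_seq :: "(nat \<Rightarrow> 'a \<Rightarrow> 'k::field) \<Rightarrow> bool" where
  "lin_indep_seq \<sigma> \<longleftrightarrow> (\<forall>F c. finite F \<longrightarrow> (\<forall>x. (\<Sum>n\<in>F. c n * \<sigma> n x) = 0) \<longrightarrow> (\<forall>n\<in>F. c n = 0))"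

end

theory Submission
  imports Defs "HOL-Library.Function_Algebras"
begin

(*
  Fix C in CU, finitely many test vectors As and eps > 0.  Choose points p_0, ..., p_(m-1)
  of C forming an eps/4-net of C in every coordinate A in As.  Linear independence of the
  sigma_n yields functionals tau_n, bounded on U, and vectors D_n with tau_n (D_k) = delta_nk
  and p_j (D_n) = 0.  For small theta and suitable weights e_n > 0 the set

    G = { (1 - theta) sum_(j<m) x_j p_j + sum_n x_n e_n tau_n :
          x_j >= 0 for j < m,  sum_(j<m) x_j = 1,  sum_n x_n^2 <= 1 }

  is a compact convex subset of the polar of U lying within eps of C for each d_H^(A),
  A in As.  Evaluation at sum_(k<=N) (y_k / e_k) D_k is the l^2 inner product with y, so
  every finitely supported unit vector y gives an exposed point of G; truncating x after N
  coordinates and completing it to a unit vector shows that these points are dense in G.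
  Hence G is in D_0U and C lies in the closure of D_0U.  Exposed points are extreme, so
  D_0U is contained in D_U.
*)

section \<open>Linear functionals and biorthogonal systems\<close>

definition lin_functional :: "('k::field \<Rightarrow> 'a::ab_group_add \<Rightarrow> 'a) \<Rightarrow> ('a \<Rightarrow> 'k) \<Rightarrow> bool" where
  "lin_functional sm \<phi> \<longleftrightarrow> (\<forall>x y. \<phi> (x + y) = \<phi> x + \<phi> y) \<and> (\<forall>c x. \<phi> (sm c x) = c * \<phi> x)"

lemma lin_functional_add: "lin_functional sm \<phi> \<Longrightarrow> \<phi> (x + y) = \<phi> x + \<phi> y"
  unfolding lin_functional_def by blast

lemma lin_functional_scale: "lin_functional sm \<phi> \<Longrightarrow> \<phi> (sm c x) = c * \<phi> x"
  unfolding lin_functional_def by blast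

lemma lin_functional_zero: "lin_functional sm \<phi> \<Longrightarrow> \<phi> 0 = 0"
  using lin_functional_add[of sm \<phi> 0 0] by (metis add.right_neutral add_left_cancel)

lemma lin_functional_diff: "lin_functional sm \<phi> \<Longrightarrow> \<phi> (x - y) = \<phi> x - \<phi> y"
  using lin_functional_add[of sm \<phi> "x - y" y] by (simp add: algebra_simps)

lemma lin_functional_sum: "lin_functional sm \<phi> \<Longrightarrow> \<phi> (\<Sum>i\<in>F. g i) = (\<Sum>i\<in>F. \<phi> (g i))"
  by (induction F rule: infinite_finite_induct) (auto simp: lin_functional_zero lin_functional_add)

lemma lin_functional_lincomb:
  "(\<And>i. i \<in> F \<Longrightarrow> lin_functional sm (f i)) \<Longrightarrow> lin_functional sm (\<lambda>x. \<Sum>i\<in>F. c i * f i x)"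
  by (simp add: lin_functional_def sum.distrib sum_distrib_left algebra_simps)

lemma lin_functional_plus:
  "lin_functional sm f \<Longrightarrow> lin_functional sm g \<Longrightarrow> lin_functional sm (\<lambda>x. f x + g x)"
  by (simp add: lin_functional_def algebra_simps)

lemma lin_functional_minus:
  "lin_functional sm f \<Longrightarrow> lin_functional sm g \<Longrightarrow> lin_functional sm (\<lambda>x. f x - g x)"
  by (simp add: lin_functional_def algebra_simps)

lemma tdual_imp_lin_functional: "\<phi> \<in> tdual sm \<Longrightarrow> lin_functional sm \<phi>"
  by (simp add: tdual_def lin_functional_def)

lemma polar_imp_lin_functional: "\<phi> \<in> polar sm U \<Longrightarrow> lin_functional sm \<phi>"
  by (simp add: polar_def tdual_imp_lin_functional)

interpretation fun_space:
  Vector_Spaces.vector_space "(\<lambda>c f x. c * f x) :: 'k::field \<Rightarrow> ('a \<Rightarrow> 'k) \<Rightarrow> 'a \<Rightarrow> 'k"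
  by unfold_locales (auto simp: fun_eq_iff algebra_simps)

lemma sum_fun_apply: "(\<Sum>i\<in>F. f i) x = (\<Sum>i\<in>F. f i x)"
  by (induction F rule: infinite_finite_induct) auto

lemma span_vanishing:
  assumes "\<forall>\<phi>\<in>S. \<phi> x = 0" "\<psi> \<in> fun_space.span S"
  shows "\<psi> x = (0::'k::field)"
  using assms(2) by (induction rule: fun_space.span_induct_alt) (use assms(1) in auto)

lemma lin_functional_separation:
  fixes S :: "('a::ab_group_add \<Rightarrow> 'k::field) set"
  assumes "finite S" "\<forall>\<phi>\<in>S. lin_functional sm \<phi>" "lin_functional sm \<psi>" "\<psi> \<notin> fun_space.span S"
  shows "\<exists>x. (\<forall>\<phi>\<in>S. \<phi> x = 0) \<and> \<psi> x = 1"
  using assms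
proof (induction S arbitrary: \<psi> rule: finite_induct)
  case empty
  then obtain x where x: "\<psi> x \<noteq> 0" by (auto simp: fun_eq_iff)
  then have "\<psi> (sm (1 / \<psi> x) x) = 1" using empty.prems(2) by (simp add: lin_functional_scale)
  then show ?case by blast
next
  case (insert \<phi>\<^sub>0 S)
  have lin\<^sub>0: "lin_functional sm \<phi>\<^sub>0" and linS: "\<forall>\<phi>\<in>S. lin_functional sm \<phi>"
    using insert.prems(1) by auto
  show ?case
  proof (cases "\<phi>\<^sub>0 \<in> fun_space.span S")
    case True
    then have "\<psi> \<notin> fun_space.span S" using insert.prems(3) fun_space.span_redundant by metis
    then obtain x where x: "\<forall>\<phi>\<in>S. \<phi> x = 0" "\<psi> x = 1" using insert.IH linS insert.prems(2) by blast
    moreover have "\<phi>\<^sub>0 x = 0" using span_vanishing[OF x(1) True] .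
    ultimately show ?thesis by auto
  next
    case False
    then obtain y where y: "\<forall>\<phi>\<in>S. \<phi> y = 0" "\<phi>\<^sub>0 y = 1" using insert.IH linS lin\<^sub>0 by blast
    define \<psi>' where "\<psi>' = (\<lambda>x. \<psi> x - \<psi> y * \<phi>\<^sub>0 x)"
    have "lin_functional sm \<psi>'"
      using insert.prems(2) lin\<^sub>0 by (auto simp: lin_functional_def \<psi>'_def algebra_simps)
    moreover have "\<psi>' \<notin> fun_space.span S"
    proof
      assume "\<psi>' \<in> fun_space.span S"
      moreover have "\<psi>' = \<psi> - (\<lambda>x. \<psi> y * \<phi>\<^sub>0 x)" by (auto simp: \<psi>'_def fun_eq_iff)
      ultimately have "\<psi> \<in> fun_space.span (insert \<phi>\<^sub>0 S)" using fun_space.span_breakdown_eq by auto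
      then show False using insert.prems(3) by blast
    qed
    ultimately obtain x where x: "\<forall>\<phi>\<in>S. \<phi> x = 0" "\<psi>' x = 1" using insert.IH linS by blast
    \<comment> \<open>shift \<open>x\<close> along \<open>y\<close> so that \<open>\<phi>\<^sub>0\<close> vanishes as well\<close>
    define z where "z = x + sm (- \<phi>\<^sub>0 x) y"
    have z: "\<phi> z = \<phi> x - \<phi>\<^sub>0 x * \<phi> y" if "lin_functional sm \<phi>" for \<phi>
      using that by (simp add: z_def lin_functional_add lin_functional_scale)
    have "\<phi>\<^sub>0 z = 0" using z[OF lin\<^sub>0] y(2) by simp
    moreover have "\<phi> z = 0" if "\<phi> \<in> S" for \<phi> using z[of \<phi>] that linS x(1) y(1) by auto
    ultimately have "\<forall>\<phi>\<in>insert \<phi>\<^sub>0 S. \<phi> z = 0" by blast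
    moreover have "\<psi> z = 1" using z[OF insert.prems(2)] x(2) by (simp add: \<psi>'_def mult.commute)
    ultimately show ?thesis by blast
  qed
qed

lemma lin_indep_seq_inj:
  assumes "lin_indep_seq (\<sigma> :: nat \<Rightarrow> 'a \<Rightarrow> 'k::field)"
  shows "inj \<sigma>"
proof (rule injI, rule ccontr)
  fix i j assume "\<sigma> i = \<sigma> j" "i \<noteq> j"
  then have "\<forall>x. (\<Sum>n\<in>{i, j}. (if n = i then 1 else - 1) * \<sigma> n x) = (0::'k)" by simp
  then show False
    using assms[unfolded lin_indep_seq_def, rule_format, of "{i, j}" "\<lambda>n. if n = i then 1 else - 1" i]
    by simp
qed

lemma lin_indep_seq_not_in_span:
  assumes "lin_indep_seq (\<sigma> :: nat \<Rightarrow> 'a \<Rightarrow> 'k::field)" "finite S"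
  obtains i where "\<sigma> i \<notin> fun_space.span S"
proof -
  have inj: "inj \<sigma>" using lin_indep_seq_inj[OF assms(1)] .
  have "fun_space.independent (range \<sigma>)"
    unfolding fun_space.independent_explicit_module
  proof (intro allI impI)
    fix T u v assume T: "finite T" "T \<subseteq> range \<sigma>" and sum: "(\<Sum>v\<in>T. (\<lambda>x. u v * v x)) = 0"
      and v: "v \<in> T"
    obtain F where F: "finite F" "T = \<sigma> ` F" using finite_subset_image[OF T] by auto
    have "inj_on \<sigma> F" using inj by (auto intro: inj_on_subset)
    have "\<forall>x. (\<Sum>n\<in>F. u (\<sigma> n) * \<sigma> n x) = 0"
    proof
      fix x
      have "(\<Sum>v\<in>T. (\<lambda>x. u v * v x)) x = 0" using sum by simp
      then show "(\<Sum>n\<in>F. u (\<sigma> n) * \<sigma> n x) = 0"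
        unfolding F(2) sum_fun_apply sum.reindex[OF \<open>inj_on \<sigma> F\<close>] by simp
    qed
    then have "\<forall>n\<in>F. u (\<sigma> n) = 0"
      using assms(1)[unfolded lin_indep_seq_def, rule_format, OF F(1), of "\<lambda>n. u (\<sigma> n)"] by blast
    then show "u v = 0" using v F(2) by auto
  qed
  then have "\<not> range \<sigma> \<subseteq> fun_space.span S"
    using fun_space.independent_span_bound[OF assms(2)] inj finite_imageD infinite_UNIV_nat by blast
  then show ?thesis using that by blast
qed

lemma bounded_lincomb_comp:
  fixes f :: "'i \<Rightarrow> 'a \<Rightarrow> 'k::real_normed_field"
  assumes "\<And>i. i \<in> F \<Longrightarrow> bounded (f i ` S)"
  shows "bounded ((\<lambda>x. \<Sum>i\<in>F. c i * f i x) ` S)"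
  using assms
proof (induction F rule: infinite_finite_induct)
  case (insert i F)
  have "bounded ((\<lambda>y. c i * y) ` f i ` S)"
    using insert.prems by (intro bounded_linear_image bounded_linear_mult_right) auto
  then show ?case
    using insert by (auto simp: image_image intro: bounded_plus_comp)
qed (auto intro: finite_imp_bounded finite_subset[of _ "{0}"])

definition biorthogonal_upto ::
  "('k::real_normed_field \<Rightarrow> 'a::ab_group_add \<Rightarrow> 'a) \<Rightarrow> 'a set \<Rightarrow> ('a \<Rightarrow> 'k) set \<Rightarrow> nat \<Rightarrow>
     (nat \<Rightarrow> 'a \<Rightarrow> 'k) \<Rightarrow> (nat \<Rightarrow> 'a) \<Rightarrow> bool" where
  "biorthogonal_upto sm U P n \<tau> D \<longleftrightarrow>
     (\<forall>k<n. lin_functional sm (\<tau> k) \<and> bounded (\<tau> k ` U) \<and> (\<forall>\<phi>\<in>P. \<phi> (D k) = 0)) \<and>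
     (\<forall>k<n. \<forall>j<n. \<tau> k (D j) = (if k = j then 1 else 0))"

lemma biorthogonal_upto_extend:
  fixes \<sigma> :: "nat \<Rightarrow> 'a::ab_group_add \<Rightarrow> 'k::real_normed_field"
  assumes P: "finite P" "\<forall>\<phi>\<in>P. lin_functional sm \<phi>"
    and \<sigma>: "lin_indep_seq \<sigma>" "\<forall>i. lin_functional sm (\<sigma> i) \<and> bounded (\<sigma> i ` U)"
    and T: "biorthogonal_upto sm U P n T D"
  obtains \<tau> d where "biorthogonal_upto sm U P (Suc n) (T(n := \<tau>)) (D(n := d))"
proof -
  define S where "S = P \<union> T ` {..<n}"
  have S: "finite S" "\<forall>\<phi>\<in>S. lin_functional sm \<phi>"
    using P T by (auto simp: S_def biorthogonal_upto_def)
  obtain i where i: "\<sigma> i \<notin> fun_space.span S" using lin_indep_seq_not_in_span[OF \<sigma>(1) S(1)] .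
  obtain d where d: "\<forall>\<phi>\<in>S. \<phi> d = 0" "\<sigma> i d = 1"
    using lin_functional_separation[OF S] \<sigma>(2) i by blast
  have T_lin: "lin_functional sm (T k)" and T_bounded: "bounded (T k ` U)" if "k < n" for k
    using T that by (auto simp: biorthogonal_upto_def)
  \<comment> \<open>one Gram--Schmidt step: remove from \<open>\<sigma> i\<close> its components along the \<open>T k\<close>\<close>
  define \<tau> where "\<tau> = (\<lambda>x. \<sigma> i x - (\<Sum>k<n. \<sigma> i (D k) * T k x))"
  have "lin_functional sm \<tau>"
    unfolding \<tau>_def using \<sigma>(2) T_lin by (intro lin_functional_minus lin_functional_lincomb) auto
  moreover have "bounded (\<tau> ` U)"
    unfolding \<tau>_def using \<sigma>(2) T_bounded by (intro bounded_minus_comp bounded_lincomb_comp) auto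
  moreover have Td: "T k d = 0" if "k < n" for k using d(1) that by (auto simp: S_def)
  moreover have "\<tau> d = 1" using d(2) Td by (simp add: \<tau>_def)
  moreover have "\<tau> (D j) = 0" if "j < n" for j
  proof -
    have "(\<Sum>k<n. \<sigma> i (D k) * T k (D j)) = (\<Sum>k<n. if k = j then \<sigma> i (D j) else 0)"
      using T that by (intro sum.cong) (auto simp: biorthogonal_upto_def)
    then show ?thesis using that by (simp add: \<tau>_def)
  qed
  moreover have "\<forall>\<phi>\<in>P. \<phi> d = 0" using d(1) by (auto simp: S_def)
  ultimately have "biorthogonal_upto sm U P (Suc n) (T(n := \<tau>)) (D(n := d))"
    using T by (auto simp: biorthogonal_upto_def less_Suc_eq)
  then show ?thesis by (rule that)
qed

lemma biorthogonal_system: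
  fixes \<sigma> :: "nat \<Rightarrow> 'a::ab_group_add \<Rightarrow> 'k::real_normed_field"
  assumes "finite P" "\<forall>\<phi>\<in>P. lin_functional sm \<phi>"
    and "lin_indep_seq \<sigma>" "\<forall>i. lin_functional sm (\<sigma> i) \<and> bounded (\<sigma> i ` U)"
  obtains \<tau> :: "nat \<Rightarrow> 'a \<Rightarrow> 'k" and D :: "nat \<Rightarrow> 'a"
  where "\<forall>n. lin_functional sm (\<tau> n) \<and> bounded (\<tau> n ` U)"
    "\<forall>n. \<forall>\<phi>\<in>P. \<phi> (D n) = 0" "\<forall>n k. \<tau> n (D k) = (if n = k then 1 else 0)"
proof -
  have "\<exists>f. \<forall>n. biorthogonal_upto sm U P n (fst (f n)) (snd (f n)) \<and>
      (\<exists>\<tau> d. f (Suc n) = ((fst (f n))(n := \<tau>), (snd (f n))(n := d)))"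
  proof (rule dependent_nat_choice[where P = "\<lambda>n x. biorthogonal_upto sm U P n (fst x) (snd x)"
        and Q = "\<lambda>n x y. \<exists>\<tau> d. y = ((fst x)(n := \<tau>), (snd x)(n := d))"])
    fix x n assume "biorthogonal_upto sm U P n (fst x) (snd x)"
    then obtain \<tau> d where "biorthogonal_upto sm U P (Suc n) ((fst x)(n := \<tau>)) ((snd x)(n := d))"
      by (rule biorthogonal_upto_extend[OF assms])
    then show "\<exists>y. biorthogonal_upto sm U P (Suc n) (fst y) (snd y) \<and>
        (\<exists>\<tau> d. y = ((fst x)(n := \<tau>), (snd x)(n := d)))" by force
  qed (simp add: biorthogonal_upto_def)
  then obtain f where f: "\<And>n. biorthogonal_upto sm U P n (fst (f n)) (snd (f n))"
    and step: "\<And>n. \<exists>\<tau> d. f (Suc n) = ((fst (f n))(n := \<tau>), (snd (f n))(n := d))" by blast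
  define \<tau> where "\<tau> k = fst (f (Suc k)) k" for k
  define D where "D k = snd (f (Suc k)) k" for k
  have prefix: "fst (f N) k = \<tau> k \<and> snd (f N) k = D k" if "k < N" for k N
    using that
  proof (induction N)
    case (Suc N)
    obtain \<tau>' d where "f (Suc N) = ((fst (f N))(N := \<tau>'), (snd (f N))(N := d))" using step by blast
    then show ?case using Suc by (cases "k = N") (auto simp: \<tau>_def D_def)
  qed simp
  have biorth: "\<tau> n (D k) = (if n = k then 1 else 0)" for n k
  proof -
    have "n < Suc (max n k)" "k < Suc (max n k)" by auto
    then show ?thesis using f[of "Suc (max n k)"] prefix by (auto simp: biorthogonal_upto_def)
  qed
  have \<tau>: "lin_functional sm (\<tau> n) \<and> bounded (\<tau> n ` U)" and D: "\<forall>\<phi>\<in>P. \<phi> (D n) = 0" for n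
    using f[of "Suc n"] by (auto simp: biorthogonal_upto_def \<tau>_def D_def)
  show ?thesis using that biorth \<tau> D by blast
qed

section \<open>Functionals bounded on a neighbourhood of zero\<close>

lemma tvs_continuous_on_scale:
  assumes "tvs sm" "continuous_on UNIV f" "continuous_on UNIV g"
  shows "continuous_on UNIV (\<lambda>x. sm (f x) (g x))"
proof -
  have "continuous_on UNIV (\<lambda>p. sm (fst p) (snd p))" using assms(1) by (simp add: tvs_def)
  from continuous_on_compose2[OF this continuous_on_Pair[OF assms(2,3)]] show ?thesis by simp
qed

lemma tvs_continuous_on_add:
  fixes sm :: "'k::real_normed_field \<Rightarrow> 'a::{ab_group_add,t2_space} \<Rightarrow> 'a"
    and f g :: "'b::topological_space \<Rightarrow> 'a"
  assumes "tvs sm" "continuous_on UNIV f" "continuous_on UNIV g"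
  shows "continuous_on UNIV (\<lambda>x. f x + g x)"
proof -
  have "continuous_on UNIV (\<lambda>p::'a \<times> 'a. fst p + snd p)" using assms(1) by (simp add: tvs_def)
  from continuous_on_compose2[OF this continuous_on_Pair[OF assms(2,3)]] show ?thesis by simp
qed

lemma lin_functional_pointwise_bound:
  fixes sm :: "'k::real_normed_field \<Rightarrow> 'a::{ab_group_add,t2_space} \<Rightarrow> 'a"
  assumes "tvs sm" "0 \<in> interior U"
  obtains r where "\<And>A. r A > 0"
    "\<And>\<phi> M A. lin_functional sm \<phi> \<Longrightarrow> \<forall>B\<in>U. norm (\<phi> B) \<le> M \<Longrightarrow> norm (\<phi> A) \<le> r A * M"
proof -
  interpret Vector_Spaces.vector_space sm using assms(1) by (simp add: tvs_def)
  have "\<forall>A. \<exists>r>0. \<forall>\<phi> M. lin_functional sm \<phi> \<longrightarrow> (\<forall>B\<in>U. norm (\<phi> B) \<le> M) \<longrightarrow> norm (\<phi> A) \<le> r * M"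
  proof
    fix A
    have "continuous_on UNIV (\<lambda>c. sm c A)"
      using tvs_continuous_on_scale[OF assms(1) continuous_on_id continuous_on_const] .
    then have "open ((\<lambda>c. sm c A) -` interior U)"
      using continuous_on_open_vimage[OF open_UNIV] by auto
    moreover have "(0::'k) \<in> (\<lambda>c. sm c A) -` interior U" using assms(2) by simp
    ultimately obtain d where d: "d > 0" "ball 0 d \<subseteq> (\<lambda>c. sm c A) -` interior U"
      by (metis openE)
    moreover have "of_real (d / 2) \<in> ball (0::'k) d" using d(1) by simp
    ultimately have U: "sm (of_real (d / 2)) A \<in> U" using interior_subset by blast
    have "norm (\<phi> A) \<le> 2 / d * M" if "lin_functional sm \<phi>" "\<forall>B\<in>U. norm (\<phi> B) \<le> M" for \<phi> M
    proof -
      have "norm (of_real (d / 2) * \<phi> A) \<le> M" using that U by (metis lin_functional_scale)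
      then show ?thesis using d(1) by (simp add: norm_mult field_simps)
    qed
    moreover have "2 / d > 0" using d(1) by simp
    ultimately show "\<exists>r>0. \<forall>\<phi> M. lin_functional sm \<phi> \<longrightarrow> (\<forall>B\<in>U. norm (\<phi> B) \<le> M) \<longrightarrow>
        norm (\<phi> A) \<le> r * M" by blast
  qed
  then obtain r where "\<forall>A. r A > 0 \<and> (\<forall>\<phi> M. lin_functional sm \<phi> \<longrightarrow> (\<forall>B\<in>U. norm (\<phi> B) \<le> M) \<longrightarrow>
      norm (\<phi> A) \<le> r A * M)"
    by (auto dest!: choice)
  then show ?thesis using that[of r] by blast
qed

lemma lin_functional_continuous:
  fixes sm :: "'k::real_normed_field \<Rightarrow> 'a::{ab_group_add,t2_space} \<Rightarrow> 'a"
  assumes "tvs sm" "0 \<in> interior U" "lin_functional sm \<phi>" "\<forall>A\<in>U. norm (\<phi> A) \<le> 1"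
  shows "continuous_on UNIV \<phi>"
  unfolding continuous_on_def
proof (intro ballI tendstoI)
  fix x :: 'a and e :: real assume e: "e > 0"
  define h where "h y = sm (of_real (2 / e)) (y + - x)" for y
  have "continuous_on UNIV h"
    unfolding h_def
    by (intro tvs_continuous_on_scale[OF assms(1) continuous_on_const]
        tvs_continuous_on_add[OF assms(1) continuous_on_id continuous_on_const])
  then have "open (h -` interior U)" using continuous_on_open_vimage[OF open_UNIV] by auto
  moreover have "x \<in> h -` interior U"
  proof -
    interpret Vector_Spaces.vector_space sm using assms(1) by (simp add: tvs_def)
    show ?thesis using assms(2) by (simp add: h_def)
  qed
  moreover have "dist (\<phi> y) (\<phi> x) < e" if "y \<in> h -` interior U" for y
  proof -
    have "norm (\<phi> (h y)) \<le> 1" using that interior_subset assms(4) by blast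
    moreover have "\<phi> (h y) = of_real (2 / e) * (\<phi> y - \<phi> x)"
      using assms(3) by (simp add: h_def lin_functional_scale lin_functional_diff)
    ultimately have "norm (of_real (2 / e) :: 'k) * norm (\<phi> y - \<phi> x) \<le> 1" by (metis norm_mult)
    then have "2 / e * norm (\<phi> y - \<phi> x) \<le> 1" unfolding norm_of_real using e by simp
    then show ?thesis using e by (simp add: dist_norm field_simps)
  qed
  ultimately show "\<forall>\<^sub>F y in at x within UNIV. dist (\<phi> y) (\<phi> x) < e"
    by (auto simp: eventually_at_topological)
qed

lemma lin_functional_in_polar:
  fixes sm :: "'k::real_normed_field \<Rightarrow> 'a::{ab_group_add,t2_space} \<Rightarrow> 'a"
  assumes "tvs sm" "0 \<in> interior U" "lin_functional sm \<phi>" "\<forall>A\<in>U. norm (\<phi> A) \<le> 1"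
  shows "\<phi> \<in> polar sm U"
  using lin_functional_continuous[OF assms] assms(3,4)
  by (auto simp: polar_def tdual_def lin_functional_def)

section \<open>Convex sets, exposed and extreme points\<close>

lemma fconvex_sum:
  fixes C :: "('a \<Rightarrow> 'k::real_normed_field) set" and x :: "nat \<Rightarrow> real"
  assumes C: "fconvex C" and p: "\<forall>j<m. p j \<in> C"
    and x: "\<forall>j<m. 0 \<le> x j" "(\<Sum>j<m. x j) = 1"
  shows "(\<lambda>A. \<Sum>j<m. of_real (x j) * p j A) \<in> C"
  using p x
proof (induction m arbitrary: x)
  case (Suc m)
  define s where "s = (\<Sum>j<m. x j)"
  have s: "0 \<le> s" "s + x m = 1" using Suc.prems by (auto simp: s_def intro: sum_nonneg)
  show ?case
  proof (cases "s = 0")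
    case True
    then have "\<forall>j<m. x j = 0" using Suc.prems(2) unfolding s_def by (subst (asm) sum_nonneg_eq_0_iff) auto
    then have "(\<lambda>A. \<Sum>j<Suc m. of_real (x j) * p j A) = p m" using s True by (auto simp: fun_eq_iff)
    then show ?thesis using Suc.prems(1) by simp
  next
    case False
    have "(\<lambda>A. \<Sum>j<m. of_real (x j / s) * p j A) \<in> C"
      using Suc False s(1) by (intro Suc.IH) (auto simp: s_def sum_divide_distrib[symmetric])
    moreover have "p m \<in> C" "0 \<le> s \<and> s \<le> 1" using Suc.prems s by auto
    ultimately have "(\<lambda>A. of_real s * (\<Sum>j<m. of_real (x j / s) * p j A) + of_real (1 - s) * p m A) \<in> C"
      by (rule C[unfolded fconvex_def, rule_format])
    moreover have "of_real s * (\<Sum>j<m. of_real (x j / s) * p j A) = (\<Sum>j<m. of_real (x j) * p j A)" for A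
      unfolding sum_distrib_left
    proof (rule sum.cong)
      fix j
      have "s * (x j / s) = x j" using False by simp
      then show "of_real s * (of_real (x j / s) * p j A) = of_real (x j) * p j A"
        by (metis mult.assoc of_real_mult)
    qed simp
    moreover have "1 - s = x m" using s(2) by simp
    ultimately show ?thesis by simp
  qed
qed simp

lemma exposed_pts_subset_extreme_pts:
  fixes re :: "'k::real_normed_field \<Rightarrow> real" and C :: "('a \<Rightarrow> 'k) set"
  assumes "linear re"
  shows "exposed_pts re C \<subseteq> extreme_pts C"
proof
  fix \<sigma>\<^sub>0 assume "\<sigma>\<^sub>0 \<in> exposed_pts re C"
  then obtain A where \<sigma>\<^sub>0: "\<sigma>\<^sub>0 \<in> C" and A: "\<forall>\<sigma>\<in>C. \<sigma> \<noteq> \<sigma>\<^sub>0 \<longrightarrow> re (\<sigma> A) < re (\<sigma>\<^sub>0 A)"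
    by (auto simp: exposed_pts_def)
  show "\<sigma>\<^sub>0 \<in> extreme_pts C" unfolding extreme_pts_def
  proof (intro CollectI conjI notI \<sigma>\<^sub>0)
    assume "\<exists>x\<in>C. \<exists>y\<in>C. \<exists>t::real. 0 < t \<and> t < 1 \<and> x \<noteq> y \<and>
      \<sigma>\<^sub>0 = (\<lambda>A. of_real t * x A + of_real (1 - t) * y A)"
    then obtain x y and t :: real where xy: "x \<in> C" "y \<in> C" "x \<noteq> y" and t: "0 < t" "t < 1"
      and eq: "\<sigma>\<^sub>0 = (\<lambda>A. of_real t * x A + of_real (1 - t) * y A)" by blast
    have "re (\<sigma>\<^sub>0 A) = t *\<^sub>R re (x A) + (1 - t) *\<^sub>R re (y A)"
      unfolding eq by (simp only: scaleR_conv_of_real[symmetric] linear_add[OF assms] linear_scale[OF assms])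
    then have "re (\<sigma>\<^sub>0 A) = t * re (x A) + (1 - t) * re (y A)" by simp
    moreover have "re (x A) \<le> re (\<sigma>\<^sub>0 A)" "re (y A) \<le> re (\<sigma>\<^sub>0 A)"
      using A xy(1,2) by (auto simp: le_less)
    then have "t * re (x A) \<le> t * re (\<sigma>\<^sub>0 A)" "(1 - t) * re (y A) \<le> (1 - t) * re (\<sigma>\<^sub>0 A)"
      using t by (simp_all add: mult_left_mono)
    moreover have "re (x A) < re (\<sigma>\<^sub>0 A) \<or> re (y A) < re (\<sigma>\<^sub>0 A)"
      using A xy by (cases "x = \<sigma>\<^sub>0") auto
    then have "t * re (x A) < t * re (\<sigma>\<^sub>0 A) \<or> (1 - t) * re (y A) < (1 - t) * re (\<sigma>\<^sub>0 A)"
      using t by auto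
    moreover have "t * re (\<sigma>\<^sub>0 A) + (1 - t) * re (\<sigma>\<^sub>0 A) = re (\<sigma>\<^sub>0 A)"
      by (simp add: algebra_simps)
    ultimately show False by linarith
  qed
qed

lemma D0U_subset_DU:
  assumes "linear re"
  shows "D0U sm re U \<subseteq> DU sm U"
proof
  fix C assume "C \<in> D0U sm re U"
  then have C: "C \<in> CU sm U" and eq: "C = weakstar sm closure_of exposed_pts re C"
    by (auto simp: D0U_def)
  have "weakstar sm closure_of exposed_pts re C \<subseteq> weakstar sm closure_of extreme_pts C"
    by (rule closure_of_mono[OF exposed_pts_subset_extreme_pts[OF assms]])
  moreover have "weakstar sm closure_of extreme_pts C \<subseteq> C"
    using C by (intro closure_of_minimal) (auto simp: CU_def extreme_pts_def)
  ultimately have "C = weakstar sm closure_of extreme_pts C" using eq by blast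
  then show "C \<in> DU sm U" using C by (simp add: DU_def)
qed

lemma re_of_real:
  fixes re :: "'k::real_normed_algebra_1 \<Rightarrow> real"
  assumes "linear re" "re 1 = 1"
  shows "re (of_real r) = r"
  using linear_scale[OF assms(1), of r 1] assms(2) by (simp add: of_real_def)

section \<open>Real coefficient sequences\<close>

lemma tendsto_coordinatewise:
  fixes f :: "'b \<Rightarrow> nat \<Rightarrow> real"
  assumes "\<And>i. ((\<lambda>c. f c i) \<longlongrightarrow> l i) F"
  shows "(f \<longlongrightarrow> l) F"
proof -
  have "limitin (product_topology (\<lambda>_. euclidean) UNIV) f l F"
    using assms by (simp add: limitin_componentwise)
  then show ?thesis by (simp add: euclidean_product_topology)
qed

lemma continuous_on_coordinate: "continuous_on S (\<lambda>x::nat \<Rightarrow> real. x n)"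
  by (rule continuous_on_subset[OF continuous_on_product_coordinates]) simp

definition unit_completion :: "(nat \<Rightarrow> real) \<Rightarrow> nat \<Rightarrow> nat \<Rightarrow> real" where
  "unit_completion x N k =
     (if k < N then x k else if k = N then sqrt (1 - (\<Sum>n<N. (x n)\<^sup>2)) else 0)"

lemma sum_squares_unit_completion:
  assumes "(\<Sum>n<N. (x n)\<^sup>2) \<le> 1"
  shows "(\<Sum>k<Suc N. (unit_completion x N k)\<^sup>2) = 1"
proof -
  have "(\<Sum>k<N. (unit_completion x N k)\<^sup>2) = (\<Sum>k<N. (x k)\<^sup>2)"
    by (intro sum.cong) (auto simp: unit_completion_def)
  then show ?thesis using assms by (simp add: unit_completion_def)
qed

lemma unit_completion_beyond: "N < k \<Longrightarrow> unit_completion x N k = 0"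
  by (simp add: unit_completion_def)

lemma sum_squares_unit_completion_le:
  assumes "(\<Sum>n<N. (x n)\<^sup>2) \<le> 1"
  shows "(\<Sum>k<M. (unit_completion x N k)\<^sup>2) \<le> 1"
proof -
  have "(\<Sum>k<M. (unit_completion x N k)\<^sup>2) \<le> (\<Sum>k<max M (Suc N). (unit_completion x N k)\<^sup>2)"
    by (rule sum_mono2) auto
  also have "\<dots> = (\<Sum>k<Suc N. (unit_completion x N k)\<^sup>2)"
    by (rule sum.mono_neutral_right) (auto simp: unit_completion_def)
  finally show ?thesis using sum_squares_unit_completion[OF assms] by simp
qed

lemma unit_completion_tendsto: "(\<lambda>N. unit_completion x N) \<longlonglongrightarrow> x"
proof (rule tendsto_coordinatewise)
  fix i
  have "\<forall>\<^sub>F N in sequentially. unit_completion x N i = x i"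
    by (auto simp: eventually_sequentially unit_completion_def intro!: exI[of _ "Suc i"])
  then show "(\<lambda>N. unit_completion x N i) \<longlonglongrightarrow> x i" by (rule tendsto_eventually)
qed

lemma inner_unit_lt_1:
  fixes y z :: "nat \<Rightarrow> real"
  assumes z: "\<forall>M. (\<Sum>k<M. (z k)\<^sup>2) \<le> 1" and y: "(\<Sum>k<Suc N. (y k)\<^sup>2) = 1" "\<forall>k>N. y k = 0"
    and "z \<noteq> y"
  shows "(\<Sum>k<Suc N. y k * z k) < 1"
proof -
  obtain i where i: "z i \<noteq> y i" using \<open>z \<noteq> y\<close> by auto
  define M where "M = max (Suc N) (Suc i)"
  have "0 < (z i - y i)\<^sup>2" using i by simp
  also have "\<dots> \<le> (\<Sum>k<M. (z k - y k)\<^sup>2)"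
    by (rule member_le_sum) (auto simp: M_def)
  also have "\<dots> = (\<Sum>k<M. (z k)\<^sup>2) - 2 * (\<Sum>k<M. y k * z k) + (\<Sum>k<M. (y k)\<^sup>2)"
    by (simp add: power2_diff sum.distrib sum_subtractf sum_distrib_left algebra_simps)
  also have "(\<Sum>k<M. y k * z k) = (\<Sum>k<Suc N. y k * z k)"
    by (rule sum.mono_neutral_right) (use y(2) in \<open>auto simp: M_def\<close>)
  also have "(\<Sum>k<M. (y k)\<^sup>2) = (\<Sum>k<Suc N. (y k)\<^sup>2)"
    by (rule sum.mono_neutral_right) (use y(2) in \<open>auto simp: M_def\<close>)
  finally show ?thesis using y(1) z[rule_format, of M] by linarith
qed

lemma geometric_domination:
  fixes f :: "nat \<Rightarrow> real"
  assumes "\<And>n. 0 \<le> f n" "\<And>n. f n \<le> c * (1/2) ^ Suc n"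
  shows "summable f" "suminf f \<le> c"
proof -
  have g: "(\<lambda>n. c * (1/2) ^ Suc n) sums c" using sums_mult[OF power_half_series, of c] by simp
  show "summable f" by (rule summable_comparison_test'[OF sums_summable[OF g]]) (use assms in auto)
  then show "suminf f \<le> c" using suminf_le[OF assms(2) _ sums_summable[OF g]] sums_unique[OF g] by simp
qed

lemma geometric_weights:
  fixes M :: "nat \<Rightarrow> real"
  assumes "\<forall>n. 0 \<le> M n" "\<theta> > 0"
  obtains e where "\<And>n. e n > 0" "\<And>n. e n * M n \<le> \<theta> * (1/2) ^ Suc n"
proof (rule that)
  fix n
  show "\<theta> / (2 ^ Suc n * (M n + 1)) > 0" using assms by (simp add: add_nonneg_pos)
  have "\<theta> / (2 ^ Suc n * (M n + 1)) * M n = \<theta> / 2 ^ Suc n * (M n / (M n + 1))"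
    using assms(1) by (simp add: field_simps)
  also have "\<dots> \<le> \<theta> / 2 ^ Suc n * 1"
    using assms by (intro mult_left_mono) (auto simp: divide_le_eq_1 add_nonneg_pos)
  finally show "\<theta> / (2 ^ Suc n * (M n + 1)) * M n \<le> \<theta> * (1/2) ^ Suc n"
    by (simp add: power_one_over)
qed

section \<open>The weak-star Hausdorff hypertopology\<close>

definition hyper_open :: "('a::ab_group_add \<Rightarrow> 'k::real_normed_field) set set \<Rightarrow> bool" where
  "hyper_open S \<longleftrightarrow>
     (\<forall>F\<in>S. \<exists>As \<epsilon>. finite As \<and> \<epsilon> > 0 \<and> {G. \<forall>A\<in>As. hdist A F G < ereal \<epsilon>} \<subseteq> S)"

lemma istopology_hyper_open: "istopology hyper_open"
  unfolding istopology_def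
proof (intro conjI allI impI)
  fix S T :: "('a::ab_group_add \<Rightarrow> 'k::real_normed_field) set set"
  assume S: "hyper_open S" and T: "hyper_open T"
  show "hyper_open (S \<inter> T)"
    unfolding hyper_open_def
  proof
    fix F assume F: "F \<in> S \<inter> T"
    obtain As\<^sub>1 \<epsilon>\<^sub>1 where 1: "finite As\<^sub>1" "\<epsilon>\<^sub>1 > 0" "{G. \<forall>A\<in>As\<^sub>1. hdist A F G < ereal \<epsilon>\<^sub>1} \<subseteq> S"
      using S F unfolding hyper_open_def by blast
    obtain As\<^sub>2 \<epsilon>\<^sub>2 where 2: "finite As\<^sub>2" "\<epsilon>\<^sub>2 > 0" "{G. \<forall>A\<in>As\<^sub>2. hdist A F G < ereal \<epsilon>\<^sub>2} \<subseteq> T"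
      using T F unfolding hyper_open_def by blast
    have "{G. \<forall>A\<in>As\<^sub>1 \<union> As\<^sub>2. hdist A F G < ereal (min \<epsilon>\<^sub>1 \<epsilon>\<^sub>2)} \<subseteq> S \<inter> T"
    proof
      fix G assume "G \<in> {G. \<forall>A\<in>As\<^sub>1 \<union> As\<^sub>2. hdist A F G < ereal (min \<epsilon>\<^sub>1 \<epsilon>\<^sub>2)}"
      then have "\<forall>A\<in>As\<^sub>1. hdist A F G < ereal \<epsilon>\<^sub>1" "\<forall>A\<in>As\<^sub>2. hdist A F G < ereal \<epsilon>\<^sub>2"
        by (auto intro: order_less_le_trans)
      then show "G \<in> S \<inter> T" using 1(3) 2(3) by blast
    qed
    then show "\<exists>As \<epsilon>. finite As \<and> \<epsilon> > 0 \<and> {G. \<forall>A\<in>As. hdist A F G < ereal \<epsilon>} \<subseteq> S \<inter> T"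
      using 1(1,2) 2(1,2) by (intro exI[of _ "As\<^sub>1 \<union> As\<^sub>2"] exI[of _ "min \<epsilon>\<^sub>1 \<epsilon>\<^sub>2"]) auto
  qed
next
  fix K :: "('a::ab_group_add \<Rightarrow> 'k::real_normed_field) set set set"
  assume K: "\<forall>S\<in>K. hyper_open S"
  show "hyper_open (\<Union>K)"
    unfolding hyper_open_def
  proof
    fix F assume "F \<in> \<Union>K"
    then obtain S where S: "S \<in> K" "F \<in> S" by blast
    then obtain As \<epsilon> where "finite As" "\<epsilon> > 0" "{G. \<forall>A\<in>As. hdist A F G < ereal \<epsilon>} \<subseteq> S"
      using K unfolding hyper_open_def by blast
    then show "\<exists>As \<epsilon>. finite As \<and> \<epsilon> > 0 \<and> {G. \<forall>A\<in>As. hdist A F G < ereal \<epsilon>} \<subseteq> \<Union>K"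
      using S(1) by blast
  qed
qed

lemma openin_hyper_top: "openin hyper_top = hyper_open"
  unfolding hyper_top_def hyper_open_def[abs_def]
  by (rule topology_inverse'[OF istopology_hyper_open[unfolded hyper_open_def[abs_def]]])

lemma topspace_hyper_top: "topspace (hyper_top :: ('a::ab_group_add \<Rightarrow> 'k::real_normed_field) set topology) = UNIV"
proof -
  have "hyper_open (UNIV :: ('a \<Rightarrow> 'k) set set)"
    unfolding hyper_open_def by (auto intro!: exI[of _ "{}"] exI[of _ 1])
  then have "openin hyper_top (UNIV :: ('a \<Rightarrow> 'k) set set)" by (simp add: openin_hyper_top)
  then show ?thesis using openin_subset by blast
qed

lemma in_hyper_top_closure_ofI:
  assumes "\<And>As \<epsilon>. finite As \<Longrightarrow> \<epsilon> > 0 \<Longrightarrow> \<exists>G\<in>S. \<forall>A\<in>As. hdist A F G < ereal \<epsilon>"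
  shows "F \<in> hyper_top closure_of S"
  unfolding in_closure_of topspace_hyper_top openin_hyper_top
proof (intro conjI allI impI UNIV_I)
  fix T assume "F \<in> T \<and> hyper_open T"
  then obtain As \<epsilon> where "finite As" "\<epsilon> > 0" "{G. \<forall>A\<in>As. hdist A F G < ereal \<epsilon>} \<subseteq> T"
    unfolding hyper_open_def by blast
  then show "\<exists>G. G \<in> S \<and> G \<in> T" using assms by blast
qed

lemma bounded_imp_finite_net:
  fixes V :: "'k::heine_borel set"
  assumes "bounded V" "\<eta> > 0"
  obtains F where "finite F" "F \<subseteq> V" "\<forall>v\<in>V. \<exists>w\<in>F. dist v w < \<eta>"
proof -
  have "closure V \<subseteq> (\<Union>v\<in>V. ball v \<eta>)"
  proof
    fix x assume "x \<in> closure V"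
    then obtain v where "v \<in> V" "dist v x < \<eta>" using assms(2) closure_approachable by metis
    then show "x \<in> (\<Union>v\<in>V. ball v \<eta>)" by auto
  qed
  then obtain F where F: "F \<subseteq> V" "finite F" "closure V \<subseteq> (\<Union>v\<in>F. ball v \<eta>)"
    using compactE_image[of "closure V" V "\<lambda>v. ball v \<eta>"] compact_closure assms(1) by blast
  have net: "\<forall>v\<in>V. \<exists>w\<in>F. dist v w < \<eta>"
  proof
    fix v assume "v \<in> V"
    then have "v \<in> (\<Union>w\<in>F. ball w \<eta>)" using F(3) closure_subset by blast
    then show "\<exists>w\<in>F. dist v w < \<eta>" by (auto simp: dist_commute)
  qed
  show ?thesis by (rule that[OF F(2,1) net])
qed

lemma finite_coordinate_net:
  fixes C :: "('a \<Rightarrow> 'k::{real_normed_field,heine_borel}) set"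
  assumes "finite As" "\<eta> > 0" "C \<noteq> {}" "\<And>A. bounded ((\<lambda>\<rho>. \<rho> A) ` C)"
  obtains P where "finite P" "P \<subseteq> C" "P \<noteq> {}" "\<forall>A\<in>As. \<forall>\<rho>\<in>C. \<exists>q\<in>P. norm (\<rho> A - q A) \<le> \<eta>"
proof -
  have "\<forall>A. \<exists>Q. finite Q \<and> Q \<subseteq> C \<and> (\<forall>\<rho>\<in>C. \<exists>q\<in>Q. norm (\<rho> A - q A) \<le> \<eta>)"
  proof
    fix A
    obtain F where F: "finite F" "F \<subseteq> (\<lambda>\<rho>. \<rho> A) ` C" "\<forall>v\<in>(\<lambda>\<rho>. \<rho> A) ` C. \<exists>w\<in>F. dist v w < \<eta>"
      using bounded_imp_finite_net[OF assms(4) assms(2)] .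
    obtain Q where Q: "Q \<subseteq> C" "finite Q" "F = (\<lambda>\<rho>. \<rho> A) ` Q"
      using finite_subset_image[OF F(1,2)] by blast
    have "\<forall>\<rho>\<in>C. \<exists>q\<in>Q. norm (\<rho> A - q A) \<le> \<eta>"
    proof
      fix \<rho> assume "\<rho> \<in> C"
      then obtain w where "w \<in> F" "dist (\<rho> A) w < \<eta>" using F(3) by blast
      then show "\<exists>q\<in>Q. norm (\<rho> A - q A) \<le> \<eta>" using Q(3) by (auto simp: dist_norm intro: less_imp_le)
    qed
    with Q(1,2) show "\<exists>Q. finite Q \<and> Q \<subseteq> C \<and> (\<forall>\<rho>\<in>C. \<exists>q\<in>Q. norm (\<rho> A - q A) \<le> \<eta>)"
      by blast
  qed
  then obtain Q where Q: "\<forall>A. finite (Q A) \<and> Q A \<subseteq> C \<and> (\<forall>\<rho>\<in>C. \<exists>q\<in>Q A. norm (\<rho> A - q A) \<le> \<eta>)"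
    by (rule choice[THEN exE])
  obtain c where "c \<in> C" using assms(3) by blast
  define P where "P = insert c (\<Union>A\<in>As. Q A)"
  have "finite P" "P \<subseteq> C" "P \<noteq> {}" using assms(1) Q \<open>c \<in> C\<close> by (auto simp: P_def)
  moreover have "\<forall>A\<in>As. \<forall>\<rho>\<in>C. \<exists>q\<in>P. norm (\<rho> A - q A) \<le> \<eta>"
  proof (intro ballI)
    fix A \<rho> assume "A \<in> As" "\<rho> \<in> C"
    then obtain q where "q \<in> Q A" "norm (\<rho> A - q A) \<le> \<eta>" using Q by blast
    then show "\<exists>q\<in>P. norm (\<rho> A - q A) \<le> \<eta>" using \<open>A \<in> As\<close> by (auto simp: P_def)
  qed
  ultimately show ?thesis by (rule that)
qed

section \<open>A compact convex set with dense exposed points\<close>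

locale approximant =
  fixes sm :: "'k::{real_normed_field,banach} \<Rightarrow> 'a::{ab_group_add,t2_space} \<Rightarrow> 'a"
    and U :: "'a set" and m :: nat and p :: "nat \<Rightarrow> 'a \<Rightarrow> 'k" and \<tau> :: "nat \<Rightarrow> 'a \<Rightarrow> 'k"
    and D :: "nat \<Rightarrow> 'a" and e :: "nat \<Rightarrow> real" and \<theta> :: real
  assumes tvs: "tvs sm" and U: "0 \<in> interior U" and m_pos: "m > 0"
    and p_lin: "\<And>j. j < m \<Longrightarrow> lin_functional sm (p j)"
    and p_le_1: "\<And>j A. j < m \<Longrightarrow> A \<in> U \<Longrightarrow> norm (p j A) \<le> 1"
    and \<tau>_lin: "\<And>n. lin_functional sm (\<tau> n)"
    and p_D: "\<And>j k. j < m \<Longrightarrow> p j (D k) = 0"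
    and \<tau>_D: "\<And>n k. \<tau> n (D k) = (if n = k then 1 else 0)"
    and e_pos: "\<And>n. e n > 0"
    and summable_weighted: "\<And>A. summable (\<lambda>n. e n * norm (\<tau> n A))"
    and \<theta>: "0 \<le> \<theta>" "\<theta> \<le> 1"
    and weighted_sum_le: "\<And>A. A \<in> U \<Longrightarrow> (\<Sum>n. e n * norm (\<tau> n A)) \<le> \<theta>"
begin

definition coeffs :: "(nat \<Rightarrow> real) set" where
  "coeffs = {x. (\<forall>j<m. 0 \<le> x j) \<and> (\<Sum>j<m. x j) = 1 \<and> (\<forall>N. (\<Sum>n<N. (x n)\<^sup>2) \<le> 1)}"

definition tail :: "(nat \<Rightarrow> real) \<Rightarrow> 'a \<Rightarrow> 'k" where
  "tail x A = (\<Sum>n. of_real (x n * e n) * \<tau> n A)"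

definition comb :: "(nat \<Rightarrow> real) \<Rightarrow> 'a \<Rightarrow> 'k" where
  "comb x A = (\<Sum>j<m. of_real ((1 - \<theta>) * x j) * p j A) + tail x A"

definition G :: "('a \<Rightarrow> 'k) set" where
  "G = comb ` coeffs"

lemma coeffs_abs_le_1: "x \<in> coeffs \<Longrightarrow> \<bar>x n\<bar> \<le> 1"
proof -
  assume x: "x \<in> coeffs"
  have "(x n)\<^sup>2 \<le> (\<Sum>k<Suc n. (x k)\<^sup>2)" by (rule member_le_sum) auto
  also have "\<dots> \<le> 1" using x unfolding coeffs_def by blast
  finally show ?thesis by (simp add: abs_square_le_1)
qed

lemma norm_tail_term_le:
  "x \<in> coeffs \<Longrightarrow> norm (of_real (x n * e n) * \<tau> n A) \<le> e n * norm (\<tau> n A)"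
proof -
  assume "x \<in> coeffs"
  then have "\<bar>x n\<bar> * (e n * norm (\<tau> n A)) \<le> 1 * (e n * norm (\<tau> n A))"
    using coeffs_abs_le_1 e_pos[of n] by (intro mult_right_mono) (auto simp: less_imp_le)
  moreover have "norm (of_real (x n * e n) * \<tau> n A) = \<bar>x n\<bar> * (e n * norm (\<tau> n A))"
    using e_pos[of n] by (simp add: norm_mult abs_mult less_imp_le)
  ultimately show ?thesis by simp
qed

lemma summable_tail: "x \<in> coeffs \<Longrightarrow> summable (\<lambda>n. of_real (x n * e n) * \<tau> n A)"
  by (rule summable_comparison_test'[OF summable_weighted norm_tail_term_le])

lemma norm_tail_le: "x \<in> coeffs \<Longrightarrow> norm (tail x A) \<le> (\<Sum>n. e n * norm (\<tau> n A))"
  unfolding tail_def by (rule norm_suminf_le[OF norm_tail_term_le summable_weighted])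

lemma lin_functional_tail: "x \<in> coeffs \<Longrightarrow> lin_functional sm (tail x)"
  using summable_tail[of x]
  by (simp add: lin_functional_def tail_def lin_functional_add[OF \<tau>_lin] lin_functional_scale[OF \<tau>_lin]
      distrib_left suminf_add[symmetric] suminf_mult[symmetric] mult.left_commute)

lemma lin_functional_comb: "x \<in> coeffs \<Longrightarrow> lin_functional sm (comb x)"
  unfolding comb_def[abs_def]
  by (intro lin_functional_plus lin_functional_lincomb lin_functional_tail p_lin) auto

lemma norm_comb_le_1:
  assumes x: "x \<in> coeffs" and A: "A \<in> U"
  shows "norm (comb x A) \<le> 1"
proof -
  have "norm (\<Sum>j<m. of_real ((1 - \<theta>) * x j) * p j A) \<le> (\<Sum>j<m. norm (of_real ((1 - \<theta>) * x j) * p j A))"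
    by (rule norm_sum)
  also have "\<dots> \<le> (\<Sum>j<m. (1 - \<theta>) * x j)"
  proof (rule sum_mono)
    fix j assume j: "j \<in> {..<m}"
    then have "0 \<le> (1 - \<theta>) * x j" using x \<theta> by (simp add: coeffs_def)
    then have "norm (of_real ((1 - \<theta>) * x j) * p j A) = (1 - \<theta>) * x j * norm (p j A)"
      unfolding norm_mult norm_of_real by simp
    also have "\<dots> \<le> (1 - \<theta>) * x j"
      using p_le_1[of j A] j A \<open>0 \<le> (1 - \<theta>) * x j\<close> by (simp add: mult_left_le)
    finally show "norm (of_real ((1 - \<theta>) * x j) * p j A) \<le> (1 - \<theta>) * x j" .
  qed
  also have "\<dots> = 1 - \<theta>" using x by (simp add: coeffs_def sum_distrib_left[symmetric])
  finally have "norm (\<Sum>j<m. of_real ((1 - \<theta>) * x j) * p j A) \<le> 1 - \<theta>" .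
  moreover have "norm (tail x A) \<le> \<theta>" using norm_tail_le[OF x, of A] weighted_sum_le[OF A] by linarith
  ultimately show ?thesis
    unfolding comb_def using norm_triangle_ineq[of "\<Sum>j<m. of_real ((1 - \<theta>) * x j) * p j A" "tail x A"]
    by linarith
qed

lemma comb_in_polar: "x \<in> coeffs \<Longrightarrow> comb x \<in> polar sm U"
  using lin_functional_in_polar[OF tvs U lin_functional_comb] norm_comb_le_1 by blast

lemma tail_D: "tail x (D k) = of_real (x k * e k)"
proof -
  have "(\<lambda>n. of_real (x n * e n) * \<tau> n (D k)) = (\<lambda>n. if n = k then of_real (x n * e n) else 0)"
    by (auto simp: \<tau>_D)
  then have "(\<lambda>n. of_real (x n * e n) * \<tau> n (D k)) sums of_real (x k * e k)"
    using sums_single[of k "\<lambda>n. of_real (x n * e n)"] by (simp only:)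
  then show ?thesis unfolding tail_def by (rule sums_unique[symmetric])
qed

lemma comb_D: "comb x (D k) = of_real (x k * e k)"
  by (simp add: comb_def tail_D p_D)

lemma coeffs_convex:
  assumes x: "x \<in> coeffs" and y: "y \<in> coeffs" and t: "0 \<le> t" "t \<le> 1"
  shows "(\<lambda>n. t * x n + (1 - t) * y n) \<in> coeffs"
proof -
  have sq: "(t * a + (1 - t) * b)\<^sup>2 \<le> t * a\<^sup>2 + (1 - t) * b\<^sup>2" for a b
  proof -
    have "t * a\<^sup>2 + (1 - t) * b\<^sup>2 - (t * a + (1 - t) * b)\<^sup>2 = t * (1 - t) * (a - b)\<^sup>2"
      by (simp add: power2_eq_square algebra_simps)
    then show ?thesis using t by (smt (verit) mult_nonneg_nonneg zero_le_power2)
  qed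
  have "(\<Sum>n<N. (t * x n + (1 - t) * y n)\<^sup>2) \<le> 1" for N
  proof -
    have "(\<Sum>n<N. (t * x n + (1 - t) * y n)\<^sup>2) \<le> t * (\<Sum>n<N. (x n)\<^sup>2) + (1 - t) * (\<Sum>n<N. (y n)\<^sup>2)"
      using sum_mono[OF sq] by (simp add: sum.distrib sum_distrib_left)
    also have "\<dots> \<le> t * 1 + (1 - t) * 1"
      using x y t unfolding coeffs_def by (intro add_mono mult_left_mono) auto
    finally show ?thesis by simp
  qed
  moreover have "\<forall>j<m. 0 \<le> t * x j + (1 - t) * y j" using x y t by (simp add: coeffs_def)
  moreover have "(\<Sum>j<m. t * x j + (1 - t) * y j) = 1"
    using x y by (simp add: coeffs_def sum.distrib sum_distrib_left[symmetric])
  ultimately show ?thesis by (simp add: coeffs_def)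
qed

lemma tail_convex:
  assumes "x \<in> coeffs" "y \<in> coeffs"
  shows "tail (\<lambda>n. t * x n + (1 - t) * y n) A = of_real t * tail x A + of_real (1 - t) * tail y A"
proof -
  have "tail (\<lambda>n. t * x n + (1 - t) * y n) A =
      (\<Sum>n. of_real t * (of_real (x n * e n) * \<tau> n A) + of_real (1 - t) * (of_real (y n * e n) * \<tau> n A))"
    by (simp add: tail_def algebra_simps)
  also have "\<dots> = (\<Sum>n. of_real t * (of_real (x n * e n) * \<tau> n A)) +
      (\<Sum>n. of_real (1 - t) * (of_real (y n * e n) * \<tau> n A))"
    by (rule suminf_add[symmetric]) (intro summable_mult summable_tail assms)+
  also have "\<dots> = of_real t * tail x A + of_real (1 - t) * tail y A"
    unfolding tail_def by (simp only: suminf_mult[OF summable_tail[OF assms(1)]]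
        suminf_mult[OF summable_tail[OF assms(2)]])
  finally show ?thesis .
qed

lemma comb_convex:
  assumes "x \<in> coeffs" "y \<in> coeffs"
  shows "comb (\<lambda>n. t * x n + (1 - t) * y n) = (\<lambda>A. of_real t * comb x A + of_real (1 - t) * comb y A)"
proof
  fix A
  have "(\<Sum>j<m. of_real ((1 - \<theta>) * (t * x j + (1 - t) * y j)) * p j A) =
      of_real t * (\<Sum>j<m. of_real ((1 - \<theta>) * x j) * p j A) +
      of_real (1 - t) * (\<Sum>j<m. of_real ((1 - \<theta>) * y j) * p j A)"
    by (simp add: sum_distrib_left sum.distrib[symmetric] algebra_simps)
  then show "comb (\<lambda>n. t * x n + (1 - t) * y n) A = of_real t * comb x A + of_real (1 - t) * comb y A"
    unfolding comb_def tail_convex[OF assms] by (simp only: distrib_left add_ac)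
qed

lemma fconvex_G: "fconvex G"
  unfolding fconvex_def G_def
proof (intro ballI allI impI)
  fix a b and t :: real assume "a \<in> comb ` coeffs" "b \<in> comb ` coeffs" and t: "0 \<le> t \<and> t \<le> 1"
  then obtain x y where xy: "x \<in> coeffs" "y \<in> coeffs" "a = comb x" "b = comb y" by blast
  then have "(\<lambda>A. of_real t * a A + of_real (1 - t) * b A) = comb (\<lambda>n. t * x n + (1 - t) * y n)"
    using comb_convex by simp
  then show "(\<lambda>A. of_real t * a A + of_real (1 - t) * b A) \<in> comb ` coeffs"
    using coeffs_convex[OF xy(1,2)] t by auto
qed

lemma unit_in_coeffs:
  assumes "j < m"
  shows "(\<lambda>n. if n = j then 1 else 0) \<in> coeffs"
proof -
  have "(\<Sum>n<N. (if n = j then 1 else 0 :: real)\<^sup>2) = (\<Sum>n<N. if n = j then 1 else 0)" for N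
    by (intro sum.cong) auto
  then have "(\<Sum>n<N. (if n = j then 1 else 0 :: real)\<^sup>2) \<le> 1" for N by (simp add: sum.delta)
  then show ?thesis using assms by (simp add: coeffs_def sum.delta)
qed

lemma comb_unit:
  assumes "j < m"
  shows "comb (\<lambda>n. if n = j then 1 else 0) A = of_real (1 - \<theta>) * p j A + of_real (e j) * \<tau> j A"
proof -
  have "(\<lambda>n. of_real ((if n = j then 1 else 0) * e n) * \<tau> n A) = (\<lambda>n. if n = j then of_real (e j) * \<tau> j A else 0)"
    by auto
  then have "tail (\<lambda>n. if n = j then 1 else 0) A = of_real (e j) * \<tau> j A"
    using sums_single[of j "\<lambda>n. of_real (e j) * \<tau> j A"] by (simp add: tail_def sums_iff)
  moreover have "(\<Sum>i<m. of_real ((1 - \<theta>) * (if i = j then 1 else 0)) * p i A) =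
      (\<Sum>i<m. if i = j then of_real (1 - \<theta>) * p j A else 0)"
    by (intro sum.cong) auto
  ultimately show ?thesis using assms by (simp add: comb_def sum.delta)
qed

lemma compact_coeffs: "compact coeffs"
proof -
  have "compactin (product_topology (\<lambda>_. euclidean) UNIV) (PiE UNIV (\<lambda>_. {-1..1::real}))"
    by (simp add: compactin_PiE)
  then have cube: "compact (PiE UNIV (\<lambda>_. {-1..1::real}))" by (simp add: euclidean_product_topology)
  have "closed {x::nat \<Rightarrow> real. 0 \<le> x j}" for j
    by (rule closed_Collect_le) (auto intro: continuous_intros continuous_on_coordinate)
  then have "closed (\<Inter>j\<in>{..<m}. {x::nat \<Rightarrow> real. 0 \<le> x j})" by auto
  moreover have "closed {x::nat \<Rightarrow> real. (\<Sum>j<m. x j) = 1}"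
    by (rule closed_Collect_eq) (auto intro!: continuous_intros continuous_on_coordinate)
  moreover have "closed {x::nat \<Rightarrow> real. (\<Sum>n<N. (x n)\<^sup>2) \<le> 1}" for N
    by (rule closed_Collect_le) (auto intro!: continuous_intros continuous_on_coordinate)
  then have "closed (\<Inter>N. {x::nat \<Rightarrow> real. (\<Sum>n<N. (x n)\<^sup>2) \<le> 1})" by auto
  moreover have "coeffs = (\<Inter>j\<in>{..<m}. {x. 0 \<le> x j}) \<inter> {x. (\<Sum>j<m. x j) = 1} \<inter>
      (\<Inter>N. {x. (\<Sum>n<N. (x n)\<^sup>2) \<le> 1})"
    by (auto simp: coeffs_def)
  ultimately have "closed coeffs" by (metis closed_Int)
  with cube have "compact (PiE UNIV (\<lambda>_. {-1..1}) \<inter> coeffs)" by (rule compact_Int_closed)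
  moreover have "coeffs \<subseteq> PiE UNIV (\<lambda>_. {-1..1})" using coeffs_abs_le_1 by (auto simp: abs_le_iff)
  ultimately show ?thesis by (simp add: Int_absorb1)
qed

lemma continuous_on_comb: "continuous_on coeffs comb"
proof (rule continuous_on_coordinatewise_then_product)
  fix A
  have "uniform_limit coeffs (\<lambda>N x. \<Sum>n<N. of_real (x n * e n) * \<tau> n A) (\<lambda>x. tail x A) sequentially"
    unfolding tail_def by (rule Weierstrass_m_test[OF norm_tail_term_le summable_weighted])
  then have "continuous_on coeffs (\<lambda>x. tail x A)"
    by (rule uniform_limit_theorem[rotated])
      (auto intro!: always_eventually continuous_intros continuous_on_coordinate)
  then show "continuous_on coeffs (\<lambda>x. comb x A)"
    unfolding comb_def by (intro continuous_intros continuous_on_coordinate)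
qed

lemma G_subset_polar: "G \<subseteq> polar sm U"
  using comb_in_polar by (auto simp: G_def)

lemma closedin_G: "closedin (weakstar sm) G"
proof -
  have "Hausdorff_space (euclidean :: ('a \<Rightarrow> 'k) topology)"
    using Hausdorff_space_product_topology[of "\<lambda>_::'a. (euclidean::'k topology)" UNIV]
    by (simp add: euclidean_product_topology)
  moreover have "compactin euclidean G"
    unfolding G_def using compact_continuous_image[OF continuous_on_comb compact_coeffs] by simp
  ultimately have "closed G" using compactin_imp_closedin by fastforce
  moreover have "G \<subseteq> tdual sm" using G_subset_polar by (auto simp: polar_def)
  ultimately show ?thesis unfolding weakstar_def closedin_subtopology by (intro exI[of _ G]) auto
qed

lemma G_in_CU: "G \<in> CU sm U"
  using fconvex_G closedin_G G_subset_polar unit_in_coeffs[OF m_pos] by (auto simp: CU_def G_def)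

lemma unit_completion_in_coeffs:
  assumes x: "x \<in> coeffs" and N: "m \<le> N"
  shows "unit_completion x N \<in> coeffs"
proof -
  have "unit_completion x N j = x j" if "j < m" for j using that N by (simp add: unit_completion_def)
  moreover have "(\<Sum>n<N. (x n)\<^sup>2) \<le> 1" using x by (simp add: coeffs_def)
  ultimately show ?thesis using x sum_squares_unit_completion_le by (simp add: coeffs_def)
qed

lemma comb_unit_completion_exposed:
  assumes re: "linear re" "re 1 = 1" and x: "x \<in> coeffs" and N: "m \<le> N"
  shows "comb (unit_completion x N) \<in> exposed_pts re G"
proof -
  define y where "y = unit_completion x N"
  have y: "y \<in> coeffs" using unit_completion_in_coeffs[OF x N] by (simp add: y_def)
  have y_unit: "(\<Sum>k<Suc N. (y k)\<^sup>2) = 1"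
    using x sum_squares_unit_completion by (simp add: y_def coeffs_def)
  \<comment> \<open>by biorthogonality, evaluation at \<open>A\<close> is the \<open>\<ell>\<^sup>2\<close> inner product with \<open>y\<close>\<close>
  define A where "A = (\<Sum>k<Suc N. sm (of_real (y k / e k)) (D k))"
  have inner: "re (comb z A) = (\<Sum>k<Suc N. y k * z k)" if z: "z \<in> coeffs" for z
  proof -
    have "comb z A = (\<Sum>k<Suc N. of_real (y k / e k) * comb z (D k))"
      unfolding A_def lin_functional_sum[OF lin_functional_comb[OF z]]
      by (simp add: lin_functional_scale[OF lin_functional_comb[OF z]])
    also have "\<dots> = (\<Sum>k<Suc N. of_real (y k * z k))"
    proof (rule sum.cong)
      fix k
      have "y k / e k * (z k * e k) = y k * z k" using e_pos[of k] by simp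
      then show "of_real (y k / e k) * comb z (D k) = (of_real (y k * z k) :: 'k)"
        unfolding comb_D by (metis of_real_mult)
    qed simp
    finally show ?thesis by (simp only: linear_sum[OF re(1)] re_of_real[OF re])
  qed
  show ?thesis unfolding exposed_pts_def
  proof (intro CollectI conjI exI[of _ A] ballI impI)
    show "comb (unit_completion x N) \<in> G" using y by (simp add: G_def y_def)
  next
    fix \<sigma> assume "\<sigma> \<in> G" "\<sigma> \<noteq> comb (unit_completion x N)"
    then obtain z where z: "z \<in> coeffs" "\<sigma> = comb z" "z \<noteq> y" by (auto simp: G_def y_def)
    have z_sq: "\<forall>M. (\<Sum>k<M. (z k)\<^sup>2) \<le> 1" using z(1) by (simp add: coeffs_def)
    have y_beyond: "\<forall>k>N. y k = 0" by (simp add: y_def unit_completion_beyond)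
    have "(\<Sum>k<Suc N. y k * z k) < 1" by (rule inner_unit_lt_1[OF z_sq y_unit y_beyond z(3)])
    moreover have "(\<Sum>k<Suc N. y k * y k) = 1" using y_unit by (simp add: power2_eq_square)
    ultimately show "re (\<sigma> A) < re (comb (unit_completion x N) A)"
      using inner[OF z(1)] inner[OF y] z(2) by (simp add: y_def)
  qed
qed

lemma G_in_D0U:
  assumes re: "linear re" "re 1 = 1"
  shows "G \<in> D0U sm re U"
proof -
  have G_tdual: "G \<subseteq> tdual sm" using G_subset_polar by (auto simp: polar_def)
  have "G \<subseteq> weakstar sm closure_of exposed_pts re G"
  proof
    fix \<sigma> assume "\<sigma> \<in> G"
    then obtain x where x: "x \<in> coeffs" "\<sigma> = comb x" by (auto simp: G_def)
    have "\<forall>\<^sub>F N in sequentially. unit_completion x N \<in> coeffs"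
      using eventually_ge_at_top[of m] by eventually_elim (rule unit_completion_in_coeffs[OF x(1)])
    then have lim: "(\<lambda>N. comb (unit_completion x N)) \<longlonglongrightarrow> comb x"
      by (rule continuous_on_tendsto_compose[OF continuous_on_comb unit_completion_tendsto x(1)])
    have "\<forall>\<^sub>F N in sequentially. comb (unit_completion x N) \<in> closure (exposed_pts re G)"
      using eventually_ge_at_top[of m]
      by eventually_elim (use comb_unit_completion_exposed[OF re x(1)] closure_subset in blast)
    then have "comb x \<in> closure (exposed_pts re G)"
      using Lim_in_closed_set[OF closed_closure _ sequentially_bot lim] by blast
    moreover have "exposed_pts re G \<subseteq> tdual sm" using G_tdual by (auto simp: exposed_pts_def)
    ultimately show "\<sigma> \<in> weakstar sm closure_of exposed_pts re G"
      using \<open>\<sigma> \<in> G\<close> G_tdual x(2) unfolding weakstar_def closure_of_subtopology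
      by (auto simp: Int_absorb1)
  qed
  moreover have "weakstar sm closure_of exposed_pts re G \<subseteq> G"
    by (rule closure_of_minimal[OF _ closedin_G]) (auto simp: exposed_pts_def)
  ultimately show ?thesis using G_in_CU by (auto simp: D0U_def)
qed

lemma norm_diff_comb_unit_le:
  assumes "j < m"
  shows "norm (\<sigma> A - comb (\<lambda>n. if n = j then 1 else 0) A)
    \<le> norm (\<sigma> A - p j A) + \<theta> * norm (p j A) + (\<Sum>n. e n * norm (\<tau> n A))"
proof -
  have "\<sigma> A - comb (\<lambda>n. if n = j then 1 else 0) A =
      (\<sigma> A - p j A) + of_real \<theta> * p j A - of_real (e j) * \<tau> j A"
    using assms by (simp add: comb_unit algebra_simps)
  then have "norm (\<sigma> A - comb (\<lambda>n. if n = j then 1 else 0) A)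
      \<le> norm (\<sigma> A - p j A) + norm (of_real \<theta> * p j A) + norm (of_real (e j) * \<tau> j A)"
    by (simp only:) (rule order_trans[OF norm_triangle_ineq4 add_right_mono[OF norm_triangle_ineq]])
  also have "\<dots> = norm (\<sigma> A - p j A) + \<theta> * norm (p j A) + e j * norm (\<tau> j A)"
    using \<theta>(1) e_pos[of j] by (simp add: norm_mult)
  also have "e j * norm (\<tau> j A) \<le> (\<Sum>n. e n * norm (\<tau> n A))"
    using sum_le_suminf[OF summable_weighted, of "{j}" A] e_pos by (simp add: less_imp_le)
  finally show ?thesis by simp
qed

lemma norm_diff_comb_le:
  assumes "x \<in> coeffs"
  shows "norm ((\<Sum>j<m. of_real (x j) * p j A) - comb x A)
    \<le> \<theta> * norm (\<Sum>j<m. of_real (x j) * p j A) + (\<Sum>n. e n * norm (\<tau> n A))"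
proof -
  define c where "c = (\<Sum>j<m. of_real (x j) * p j A)"
  have "(\<Sum>j<m. of_real ((1 - \<theta>) * x j) * p j A) = of_real (1 - \<theta>) * c"
    by (simp add: c_def sum_distrib_left mult.assoc)
  then have "c - comb x A = of_real \<theta> * c - tail x A"
    by (simp add: comb_def algebra_simps)
  then have "norm (c - comb x A) \<le> norm (of_real \<theta> * c) + norm (tail x A)"
    by (simp only:) (rule norm_triangle_ineq4)
  also have "\<dots> \<le> \<theta> * norm c + (\<Sum>n. e n * norm (\<tau> n A))"
    using norm_tail_le[OF assms, of A] \<theta>(1) by (simp add: norm_mult)
  finally show ?thesis by (simp add: c_def)
qed

lemma hdist_G_less:
  assumes C: "fconvex C" "\<forall>j<m. p j \<in> C"
    and R: "\<forall>\<sigma>\<in>C. norm (\<sigma> A) \<le> R"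
    and net: "\<forall>\<rho>\<in>C. \<exists>j<m. norm (\<rho> A - p j A) \<le> \<eta>"
    and small: "\<theta> * R + (\<Sum>n. e n * norm (\<tau> n A)) + \<eta> < \<epsilon>"
  shows "hdist A C G < ereal \<epsilon>"
proof -
  define \<delta> where "\<delta> = \<theta> * R + (\<Sum>n. e n * norm (\<tau> n A)) + \<eta>"
  obtain j where "norm (p 0 A - p j A) \<le> \<eta>" using net C(2) m_pos by blast
  then have "0 \<le> \<eta>" using norm_ge_zero[of "p 0 A - p j A"] by linarith
  have "(INF \<tau>'\<in>G. ereal (norm (\<sigma> A - \<tau>' A))) \<le> ereal \<delta>" if \<sigma>: "\<sigma> \<in> C" for \<sigma>
  proof -
    obtain j where j: "j < m" "norm (\<sigma> A - p j A) \<le> \<eta>" using net \<sigma> by blast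
    have "\<theta> * norm (p j A) \<le> \<theta> * R" using R C(2) j(1) \<theta>(1) by (simp add: mult_left_mono)
    then have "norm (\<sigma> A - comb (\<lambda>n. if n = j then 1 else 0) A) \<le> \<delta>"
      using norm_diff_comb_unit_le[OF j(1), of \<sigma> A] j(2) by (simp add: \<delta>_def)
    moreover have "comb (\<lambda>n. if n = j then 1 else 0) \<in> G" using unit_in_coeffs[OF j(1)] by (simp add: G_def)
    ultimately show ?thesis by (intro INF_lower2[of "comb (\<lambda>n. if n = j then 1 else 0)"]) auto
  qed
  moreover have "(INF \<sigma>\<in>C. ereal (norm (\<sigma> A - \<tau>' A))) \<le> ereal \<delta>" if \<tau>': "\<tau>' \<in> G" for \<tau>'
  proof -
    obtain x where x: "x \<in> coeffs" "\<tau>' = comb x" using \<tau>' by (auto simp: G_def)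
    define \<sigma> where "\<sigma> = (\<lambda>A. \<Sum>j<m. of_real (x j) * p j A)"
    have "\<sigma> \<in> C" unfolding \<sigma>_def using fconvex_sum[OF C] x(1) by (simp add: coeffs_def)
    then have "\<theta> * norm (\<sigma> A) \<le> \<theta> * R" using R \<theta>(1) by (simp add: mult_left_mono)
    then have "norm (\<sigma> A - \<tau>' A) \<le> \<delta>"
      using norm_diff_comb_le[OF x(1), of A] \<open>0 \<le> \<eta>\<close> by (simp add: \<sigma>_def x(2) \<delta>_def)
    then show ?thesis using \<open>\<sigma> \<in> C\<close> by (intro INF_lower2[of \<sigma>]) auto
  qed
  ultimately have "hdist A C G \<le> ereal \<delta>"
    unfolding hdist_def by (intro max.boundedI SUP_least) auto
  also have "\<dots> < ereal \<epsilon>" using small by (simp add: \<delta>_def)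
  finally show ?thesis .
qed

end

section \<open>Density\<close>

lemma approximant_exists:
  fixes sm :: "'k::{real_normed_field,banach} \<Rightarrow> 'a::{ab_group_add,t2_space} \<Rightarrow> 'a"
  assumes tvs: "tvs sm" and U: "0 \<in> interior U"
    and \<sigma>: "lin_indep_seq \<sigma>" "\<forall>i. lin_functional sm (\<sigma> i) \<and> bounded (\<sigma> i ` U)"
    and r: "\<And>A. r A > 0"
      "\<And>\<phi> M A. lin_functional sm \<phi> \<Longrightarrow> \<forall>B\<in>U. norm (\<phi> B) \<le> M \<Longrightarrow> norm (\<phi> A) \<le> r A * M"
    and p: "m > 0" "p ` {..<m} \<subseteq> polar sm U" and \<theta>: "0 < \<theta>" "\<theta> \<le> 1"
  obtains \<tau> D e where "approximant sm U m p \<tau> D e \<theta>" "\<And>A. (\<Sum>n. e n * norm (\<tau> n A)) \<le> r A * \<theta>"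
proof -
  have p_lin: "\<forall>\<phi>\<in>p ` {..<m}. lin_functional sm \<phi>" using p(2) polar_imp_lin_functional by blast
  obtain \<tau> :: "nat \<Rightarrow> 'a \<Rightarrow> 'k" and D :: "nat \<Rightarrow> 'a"
    where \<tau>: "\<forall>n. lin_functional sm (\<tau> n) \<and> bounded (\<tau> n ` U)"
    and D: "\<forall>n. \<forall>\<phi>\<in>p ` {..<m}. \<phi> (D n) = 0" "\<forall>n k. \<tau> n (D k) = (if n = k then 1 else 0)"
    by (rule biorthogonal_system[OF finite_imageI[OF finite_lessThan] p_lin \<sigma>])
  have "\<exists>M\<ge>0. \<forall>A\<in>U. norm (\<tau> n A) \<le> M" for n
    using \<tau> unfolding bounded_pos by (blast intro: less_imp_le)
  then have "\<forall>n. \<exists>M\<ge>0. \<forall>A\<in>U. norm (\<tau> n A) \<le> M" by blast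
  then obtain M where M: "\<forall>n. 0 \<le> M n \<and> (\<forall>A\<in>U. norm (\<tau> n A) \<le> M n)"
    by (rule choice[THEN exE])
  obtain e where e_pos: "\<And>n. e n > 0" and eM: "\<And>n. e n * M n \<le> \<theta> * (1/2) ^ Suc n"
    using geometric_weights M \<theta>(1) by blast
  have term_le: "e n * norm (\<tau> n A) \<le> c * \<theta> * (1/2) ^ Suc n"
    if "norm (\<tau> n A) \<le> c * M n" "0 \<le> c" for n A c
  proof -
    have "e n * norm (\<tau> n A) \<le> c * (e n * M n)"
      using mult_left_mono[OF that(1), of "e n"] e_pos[of n] by (simp add: mult_ac)
    also have "\<dots> \<le> c * (\<theta> * (1/2) ^ Suc n)" by (rule mult_left_mono[OF eM that(2)])
    finally show ?thesis by (simp add: mult_ac)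
  qed
  have "norm (\<tau> n A) \<le> r A * M n" for n A using r(2)[of "\<tau> n" "M n" A] \<tau> M by blast
  then have bound: "e n * norm (\<tau> n A) \<le> r A * \<theta> * (1/2) ^ Suc n" for n A
    using term_le r(1) less_imp_le by blast
  have nonneg: "0 \<le> e n * norm (\<tau> n A)" for n A using e_pos[of n] by simp
  have S: "summable (\<lambda>n. e n * norm (\<tau> n A))" "(\<Sum>n. e n * norm (\<tau> n A)) \<le> r A * \<theta>" for A
    using geometric_domination[of "\<lambda>n. e n * norm (\<tau> n A)" "r A * \<theta>", OF nonneg bound] by auto
  have "e n * norm (\<tau> n A) \<le> 1 * \<theta> * (1/2) ^ Suc n" if "A \<in> U" for n A
    using term_le[of n A 1] M that by simp
  then have "(\<Sum>n. e n * norm (\<tau> n A)) \<le> 1 * \<theta>" if "A \<in> U" for A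
    using geometric_domination(2)[of "\<lambda>n. e n * norm (\<tau> n A)" "1 * \<theta>"] nonneg that by blast
  then have "approximant sm U m p \<tau> D e \<theta>"
    using tvs U p p_lin \<tau> D e_pos S(1) \<theta> by unfold_locales (auto simp: polar_def)
  then show ?thesis using that S(2) by blast
qed

lemma D0U_near:
  fixes sm :: "'k::{real_normed_field,banach,heine_borel} \<Rightarrow> 'a::{ab_group_add,t2_space} \<Rightarrow> 'a"
  assumes tvs: "tvs sm" and U: "0 \<in> interior U"
    and \<sigma>: "lin_indep_seq \<sigma>" "\<forall>i. lin_functional sm (\<sigma> i) \<and> bounded (\<sigma> i ` U)"
    and r: "\<And>A. r A > 0"
      "\<And>\<phi> M A. lin_functional sm \<phi> \<Longrightarrow> \<forall>B\<in>U. norm (\<phi> B) \<le> M \<Longrightarrow> norm (\<phi> A) \<le> r A * M"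
    and re: "linear re" "re 1 = 1"
    and C: "fconvex C" "C \<noteq> {}" "C \<subseteq> polar sm U"
    and As: "finite As" and \<epsilon>: "\<epsilon> > 0"
  shows "\<exists>G\<in>D0U sm re U. \<forall>A\<in>As. hdist A C G < ereal \<epsilon>"
proof -
  have C_le: "norm (\<rho> A) \<le> r A" if "\<rho> \<in> C" for \<rho> A
    using r(2)[of \<rho> 1 A] C(3) that polar_imp_lin_functional by (fastforce simp: polar_def)
  define R where "R = 1 + (\<Sum>A\<in>As. r A)"
  have "R > 0" unfolding R_def using r(1) by (simp add: add_pos_nonneg sum_nonneg less_imp_le)
  moreover have "r A \<le> R" if "A \<in> As" for A
    unfolding R_def using As that r(1) by (simp add: add_increasing member_le_sum less_imp_le)
  ultimately have R: "R > 0" "\<And>A. A \<in> As \<Longrightarrow> r A \<le> R" by blast+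
  define \<theta> where "\<theta> = min 1 (\<epsilon> / (4 * R))"
  have \<theta>_small: "0 < \<theta>" "\<theta> \<le> 1" "\<theta> * R \<le> \<epsilon> / 4"
    using \<epsilon> R(1) by (auto simp: \<theta>_def min_def field_simps)
  have C_bounded: "bounded ((\<lambda>\<rho>. \<rho> A) ` C)" for A
    unfolding bounded_iff by (intro exI[of _ "r A"]) (auto intro: C_le)
  have "\<epsilon> / 4 > 0" using \<epsilon> by simp
  then obtain P where P: "finite P" "P \<subseteq> C" "P \<noteq> {}"
    "\<forall>A\<in>As. \<forall>\<rho>\<in>C. \<exists>q\<in>P. norm (\<rho> A - q A) \<le> \<epsilon> / 4"
    by (rule finite_coordinate_net[OF As _ C(2) C_bounded])
  from finite_imp_nat_seg_image_inj_on[OF P(1)]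
  obtain m and p :: "nat \<Rightarrow> 'a \<Rightarrow> 'k" where "P = p ` {i. i < m}" by blast
  then have m: "P = p ` {..<m}" "m > 0" using P(3) by (auto simp: lessThan_def gr0I)
  have p_polar: "p ` {..<m} \<subseteq> polar sm U" using m(1) P(2) C(3) by blast
  obtain \<tau> D e where G: "approximant sm U m p \<tau> D e \<theta>"
    and S: "\<And>A. (\<Sum>n. e n * norm (\<tau> n A)) \<le> r A * \<theta>"
    by (rule approximant_exists[OF tvs U \<sigma>, of r m p \<theta>]) (use r m(2) p_polar \<theta>_small in auto)
  interpret approximant sm U m p \<tau> D e \<theta> by (rule G)
  have "hdist A C G < ereal \<epsilon>" if "A \<in> As" for A
  proof (rule hdist_G_less[OF C(1)])
    show "\<forall>j<m. p j \<in> C" "\<forall>\<sigma>\<in>C. norm (\<sigma> A) \<le> r A" using m(1) P(2) C_le by auto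
    show "\<forall>\<rho>\<in>C. \<exists>j<m. norm (\<rho> A - p j A) \<le> \<epsilon> / 4" using P(4) that m(1) by fastforce
    have "\<theta> * r A \<le> \<epsilon> / 4"
      using mult_left_mono[OF R(2)[OF that], of \<theta>] \<theta>_small by linarith
    then show "\<theta> * r A + (\<Sum>n. e n * norm (\<tau> n A)) + \<epsilon> / 4 < \<epsilon>"
      using S[of A] \<epsilon> by (simp add: mult.commute)
  qed
  then show ?thesis using G_in_D0U[OF re] by blast
qed

lemma CU_subset_closure_D0U:
  fixes sm :: "'k::{real_normed_field,banach,heine_borel} \<Rightarrow> 'a::{ab_group_add,t2_space} \<Rightarrow> 'a"
  assumes tvs: "tvs sm" and U: "0 \<in> interior U"
    and \<sigma>: "\<forall>n. \<sigma> n \<in> tdual sm" "lin_indep_seq \<sigma>" "\<forall>n. bdd_above ((\<lambda>A. norm (\<sigma> n A)) ` U)"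
    and re: "linear re" "re 1 = 1"
  shows "CU sm U \<subseteq> hyper_top closure_of D0U sm re U"
proof
  fix C assume "C \<in> CU sm U"
  then have C: "fconvex C" "C \<noteq> {}" "C \<subseteq> polar sm U" by (auto simp: CU_def)
  obtain r where r: "\<And>A. r A > 0"
    "\<And>\<phi> M A. lin_functional sm \<phi> \<Longrightarrow> \<forall>B\<in>U. norm (\<phi> B) \<le> M \<Longrightarrow> norm (\<phi> A) \<le> r A * M"
    using lin_functional_pointwise_bound[OF tvs U] by blast
  have \<sigma>': "\<forall>i. lin_functional sm (\<sigma> i) \<and> bounded (\<sigma> i ` U)"
    using \<sigma>(1,3) by (simp add: tdual_imp_lin_functional bdd_above_norm image_image[symmetric])
  show "C \<in> hyper_top closure_of D0U sm re U"
    by (rule in_hyper_top_closure_ofI, rule D0U_near[OF tvs U \<sigma>(2) \<sigma>', of r]) (use r re C in auto)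
qed

lemma dense_D0U_DU:
  fixes sm :: "'k::{real_normed_field,banach,heine_borel} \<Rightarrow> 'a::{ab_group_add,t2_space} \<Rightarrow> 'a"
  assumes "tvs sm" "0 \<in> interior U"
    and "\<exists>\<sigma>::nat \<Rightarrow> 'a \<Rightarrow> 'k. (\<forall>n. \<sigma> n \<in> tdual sm) \<and> lin_indep_seq \<sigma> \<and>
      (\<forall>n. bdd_above ((\<lambda>A. norm (\<sigma> n A)) ` U))"
    and "linear re" "re 1 = 1"
  shows "D0U sm re U \<subseteq> DU sm U \<and> CU sm U \<subseteq> hyper_top closure_of D0U sm re U \<and>
    CU sm U \<subseteq> hyper_top closure_of DU sm U"
  using D0U_subset_DU[OF assms(4)] CU_subset_closure_D0U[OF assms(1,2) _ _ _ assms(4,5)] assms(3)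
    closure_of_mono[OF D0U_subset_DU[OF assms(4)], of hyper_top]
  by blast

theorem theorem4p2:
  fixes smultR :: "real \<Rightarrow> 'a::{ab_group_add,t2_space} \<Rightarrow> 'a" and UR :: "'a set"
    and smultC :: "complex \<Rightarrow> 'b::{ab_group_add,t2_space} \<Rightarrow> 'b" and UC :: "'b set"
  shows
   "(tvs smultR \<and> separable_space (euclidean :: 'a topology) \<and>
     (\<forall>x y. x \<noteq> y \<longrightarrow> (\<exists>\<sigma>\<in>tdual smultR. \<sigma> x \<noteq> \<sigma> y)) \<and>
     0 \<in> interior UR \<and>
     (\<exists>\<sigma>::nat \<Rightarrow> 'a \<Rightarrow> real. (\<forall>n. \<sigma> n \<in> tdual smultR) \<and> lin_indep_seq \<sigma> \<and>
        (\<forall>n. bdd_above ((\<lambda>A. norm (\<sigma> n A)) ` UR)))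
     \<longrightarrow> D0U smultR (\<lambda>r. r) UR \<subseteq> DU smultR UR \<and>
         CU smultR UR \<subseteq> hyper_top closure_of D0U smultR (\<lambda>r. r) UR \<and>
         CU smultR UR \<subseteq> hyper_top closure_of DU smultR UR)
  \<and>
    (tvs smultC \<and> separable_space (euclidean :: 'b topology) \<and>
     (\<forall>x y. x \<noteq> y \<longrightarrow> (\<exists>\<sigma>\<in>tdual smultC. \<sigma> x \<noteq> \<sigma> y)) \<and>
     0 \<in> interior UC \<and>
     (\<exists>\<sigma>::nat \<Rightarrow> 'b \<Rightarrow> complex. (\<forall>n. \<sigma> n \<in> tdual smultC) \<and> lin_indep_seq \<sigma> \<and>
        (\<forall>n. bdd_above ((\<lambda>A. norm (\<sigma> n A)) ` UC)))
     \<longrightarrow> D0U smultC Re UC \<subseteq> DU smultC UC \<and>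
         CU smultC UC \<subseteq> hyper_top closure_of D0U smultC Re UC \<and>
         CU smultC UC \<subseteq> hyper_top closure_of DU smultC UC)"
proof -
  have "linear (\<lambda>r::real. r)" "linear Re" by (simp_all add: linear_iff)
  then show ?thesis
    using dense_D0U_DU[of smultR UR "\<lambda>r. r"] dense_D0U_DU[of smultC UC Re]
    by simp
qed

end
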